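(* Let $s,t:\mathbb R\to(0,\infty)$ and real sequences $\{a_k\}_k$, $\{b_k\}_k$ satisfy \[ a_{k+1}\le\Big(1-\frac{1}{s(b_k)}\Big)a_k+\frac1{t(b_k)}\quad\text{for all }k. \] Assume: (1) there is an interval $I=(\iota,\infty)$ such that $s$ and $t$ are continuously differentiable on $I$, $s(x)>1$ for all $x\in I$, and $\kappa:=s/t$ is non-increasing and convex on $I$; (2) $b_k\to\infty$, there is $\mathsf B$ with $b_{k+1}\le b_k+\mathsf B$ for all $k$ sufficiently large, and $\sum_{k=0}^\infty1/s(b_k)=\infty$; (3) there is $\beta\in(0,1)$ with $\mathsf B[s'(x)-\kappa(x)t'(x)]\ge-1+\beta$ for all $x\in I$. Then $\limsup_{k\to\infty}a_k/\kappa(b_k)<\infty$. *)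

theory Defs
  imports "HOL-Analysis.Analysis"
begin

end

theory Submission
  imports Defs
begin

text \<open>
  With \<open>\<kappa> = s / t\<close> and \<open>\<sigma>\<^sub>k = 1 / s(b\<^sub>k)\<close> the recursion reads
  \<open>a\<^sub>k\<^sub>+\<^sub>1 \<le> (1 - \<sigma>\<^sub>k) a\<^sub>k + \<kappa>(b\<^sub>k) \<sigma>\<^sub>k\<close>. Convexity and monotonicity of \<open>\<kappa>\<close>, together with
  \<open>b\<^sub>k\<^sub>+\<^sub>1 \<le> b\<^sub>k + B\<close> and the derivative condition, show that \<open>\<kappa>\<close> decays slowly along the
  sequence: \<open>\<kappa>(b\<^sub>k\<^sub>+\<^sub>1) \<ge> (1 - (1 - \<beta>) \<sigma>\<^sub>k) \<kappa>(b\<^sub>k)\<close>. These two facts make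
  \<open>a\<^sub>k \<le> M \<kappa>(b\<^sub>k)\<close> an invariant of the recursion as soon as \<open>M \<ge> 1 / \<beta>\<close>.
\<close>

lemma convex_antimono_above_tangent:
  fixes f :: "real \<Rightarrow> real" and \<iota> h x y D :: real
  assumes convex: "convex_on {\<iota><..} f" and antimono: "antimono_on {\<iota><..} f"
    and deriv: "(f has_real_derivative D) (at x)"
    and x: "x > \<iota>" and y: "y > \<iota>" and h: "h \<ge> 0" and y_le: "y \<le> x + h"
  shows "f x + h * D \<le> f y"
proof -
  have xh: "x + h > \<iota>" using x h by simp
  have "f (x + h) - f x \<ge> D * ((x + h) - x)"
    by (rule convex_on_imp_above_tangent[OF convex])
       (use x xh deriv in \<open>auto simp: interior_open has_field_derivative_at_within\<close>)
  moreover have "f (x + h) \<le> f y"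
    using antimono xh y y_le unfolding monotone_on_def by auto
  ultimately show ?thesis by (simp add: algebra_simps)
qed

lemma quotient_slow_decay:
  fixes s t :: "real \<Rightarrow> real" and \<iota> B \<beta> x y :: real
  assumes s_pos: "\<And>x. s x > 0" and t_pos: "\<And>x. t x > 0"
    and s_C1: "s C1_differentiable_on {\<iota><..}"
    and t_C1: "t C1_differentiable_on {\<iota><..}"
    and kappa_antimono: "antimono_on {\<iota><..} (\<lambda>x. s x / t x)"
    and kappa_convex: "convex_on {\<iota><..} (\<lambda>x. s x / t x)"
    and deriv_cond: "\<And>x. x \<in> {\<iota><..} \<Longrightarrow>
        B * (deriv s x - (s x / t x) * deriv t x) \<ge> -1 + \<beta>"
    and beta: "\<beta> \<le> 1" and x: "x > \<iota>" and y: "y > \<iota>" and y_le: "y \<le> x + B"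
  shows "s y / t y \<ge> (s x / t x) * (1 - (1 - \<beta>) / s x)"
proof -
  let ?D = "(deriv s x - (s x / t x) * deriv t x) / t x"
  have sx: "s x > 0" and tx: "t x > 0" using s_pos t_pos by auto
  have ds: "(s has_real_derivative deriv s x) (at x)"
    using s_C1 x unfolding C1_differentiable_on_eq DERIV_deriv_iff_real_differentiable by auto
  have dt: "(t has_real_derivative deriv t x) (at x)"
    using t_C1 x unfolding C1_differentiable_on_eq DERIV_deriv_iff_real_differentiable by auto
  have "((\<lambda>x. s x / t x) has_real_derivative ?D) (at x)"
    using DERIV_divide[OF ds dt] tx by (simp add: field_simps power2_eq_square)
  \<comment> \<open>for \<open>B < 0\<close> the step \<open>h = 0\<close> suffices, since then \<open>y < x\<close>\<close>
  then have "s x / t x + max B 0 * ?D \<le> s y / t y"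
    by (intro convex_antimono_above_tangent[OF kappa_convex kappa_antimono _ x y])
       (use y_le in auto)
  moreover have "max B 0 * (deriv s x - (s x / t x) * deriv t x) \<ge> -1 + \<beta>"
    using deriv_cond[of x] x beta by (cases "B \<ge> 0") auto
  then have "max B 0 * ?D \<ge> (-1 + \<beta>) / t x"
    using tx by (simp add: divide_right_mono)
  moreover have "s x / t x + (-1 + \<beta>) / t x = (s x / t x) * (1 - (1 - \<beta>) / s x)"
    using sx tx by (simp add: field_simps)
  ultimately show ?thesis by linarith
qed

lemma recursion_step_preserves_bound:
  fixes a a' k k' \<sigma> \<beta> M :: real
  assumes \<sigma>: "0 \<le> \<sigma>" "\<sigma> \<le> 1" and k: "k \<ge> 0" and \<beta>: "\<beta> > 0" and M: "M \<ge> 1 / \<beta>"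
    and rec: "a' \<le> (1 - \<sigma>) * a + k * \<sigma>"
    and decay: "k' \<ge> k * (1 - (1 - \<beta>) * \<sigma>)"
    and bound: "a \<le> k * M"
  shows "a' \<le> k' * M"
proof -
  have "1 \<le> \<beta> * M" using M \<beta> by (simp add: divide_le_eq mult.commute)
  then have \<sigma>_le: "\<sigma> \<le> \<beta> * \<sigma> * M" using \<sigma>
    by (metis mult.assoc mult.commute mult_le_cancel_left1 less_le_not_le)
  have M0: "M \<ge> 0" using M \<beta> less_le_trans[of 0 "1 / \<beta>" M] by simp
  have "(1 - \<sigma>) * a \<le> (1 - \<sigma>) * (k * M)" using \<sigma> bound by (intro mult_left_mono) auto
  then have "a' \<le> k * ((1 - \<sigma>) * M + \<sigma>)" using rec by (simp add: algebra_simps)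
  also have "\<dots> \<le> k * ((1 - (1 - \<beta>) * \<sigma>) * M)"
    using \<sigma>_le k by (intro mult_left_mono) (auto simp: algebra_simps)
  also have "\<dots> \<le> k' * M" using decay M0 by (simp add: mult.assoc[symmetric] mult_right_mono)
  finally show ?thesis .
qed

lemma recursion_ratio_bounded:
  fixes a k \<sigma> :: "nat \<Rightarrow> real" and \<beta> :: real and N n :: nat
  assumes \<sigma>: "\<And>n. n \<ge> N \<Longrightarrow> 0 \<le> \<sigma> n \<and> \<sigma> n \<le> 1" and k: "\<And>n. n \<ge> N \<Longrightarrow> k n > 0"
    and rec: "\<And>n. n \<ge> N \<Longrightarrow> a (Suc n) \<le> (1 - \<sigma> n) * a n + k n * \<sigma> n"
    and decay: "\<And>n. n \<ge> N \<Longrightarrow> k (Suc n) \<ge> k n * (1 - (1 - \<beta>) * \<sigma> n)"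
    and \<beta>: "\<beta> > 0" and n: "n \<ge> N"
  shows "a n / k n \<le> max (a N / k N) (1 / \<beta>)"
proof -
  define M where "M = max (a N / k N) (1 / \<beta>)"
  have "a n \<le> k n * M"
    using n
  proof (induction n rule: dec_induct)
    case base
    have "a N = k N * (a N / k N)" using k[of N] by simp
    also have "\<dots> \<le> k N * M" using k[of N] by (intro mult_left_mono) (auto simp: M_def)
    finally show ?case .
  next
    case (step n)
    show ?case
      using recursion_step_preserves_bound[OF _ _ _ \<beta> _ rec decay step.IH] \<sigma> k step.hyps
      by (auto simp: M_def less_imp_le)
  qed
  then show ?thesis using k[OF n] by (simp add: M_def[symmetric] divide_le_eq mult.commute)
qed

theorem lemma3p9:
  fixes s t :: "real \<Rightarrow> real" and a b :: "nat \<Rightarrow> real"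
    and \<iota> B \<beta> :: real
  assumes s_pos: "\<And>x. s x > 0" and t_pos: "\<And>x. t x > 0"
    and rec: "\<And>k. a (Suc k) \<le> (1 - 1 / s (b k)) * a k + 1 / t (b k)"
    and s_C1: "s C1_differentiable_on {\<iota><..}"
    and t_C1: "t C1_differentiable_on {\<iota><..}"
    and s_gt1: "\<And>x. x \<in> {\<iota><..} \<Longrightarrow> s x > 1"
    and kappa_antimono: "antimono_on {\<iota><..} (\<lambda>x. s x / t x)"
    and kappa_convex: "convex_on {\<iota><..} (\<lambda>x. s x / t x)"
    and b_lim: "filterlim b at_top sequentially"
    and b_step: "eventually (\<lambda>k. b (Suc k) \<le> b k + B) sequentially"
    and s_div: "\<not> summable (\<lambda>k. 1 / s (b k))"
    and beta: "0 < \<beta>" "\<beta> < 1"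
    and deriv_cond: "\<And>x. x \<in> {\<iota><..} \<Longrightarrow>
        B * (deriv s x - (s x / t x) * deriv t x) \<ge> -1 + \<beta>"
  shows "limsup (\<lambda>k. ereal (a k / (s (b k) / t (b k)))) < \<infinity>"
proof -
  define \<kappa> where "\<kappa> = (\<lambda>k. s (b k) / t (b k))"
  have \<kappa>_pos: "\<kappa> k > 0" for k using s_pos t_pos by (simp add: \<kappa>_def)
  have b_in: "eventually (\<lambda>k. b k > \<iota>) sequentially"
    using b_lim by (simp add: filterlim_at_top_dense)
  have "eventually (\<lambda>k. b k > \<iota> \<and> b (Suc k) > \<iota> \<and> b (Suc k) \<le> b k + B) sequentially"
    using b_in b_step b_in[THEN eventually_sequentially_Suc[THEN iffD2]] by eventually_elim auto
  then obtain N where N: "\<And>k. k \<ge> N \<Longrightarrow> b k > \<iota> \<and> b (Suc k) > \<iota> \<and> b (Suc k) \<le> b k + B"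
    unfolding eventually_sequentially by blast
  define M where "M = max (a N / \<kappa> N) (1 / \<beta>)"
  have "a k / \<kappa> k \<le> M" if "k \<ge> N" for k
    unfolding M_def
  proof (rule recursion_ratio_bounded[where \<sigma> = "\<lambda>k. 1 / s (b k)", OF _ _ _ _ beta(1) that])
    show "0 \<le> 1 / s (b n) \<and> 1 / s (b n) \<le> 1" if "n \<ge> N" for n
      using s_gt1[of "b n"] N[OF that] by simp
    show "a (Suc n) \<le> (1 - 1 / s (b n)) * a n + \<kappa> n * (1 / s (b n))" for n
      using rec[of n] s_pos[of "b n"] by (simp add: \<kappa>_def)
    show "\<kappa> (Suc n) \<ge> \<kappa> n * (1 - (1 - \<beta>) * (1 / s (b n)))" if "n \<ge> N" for n
      using quotient_slow_decay[OF s_pos t_pos s_C1 t_C1 kappa_antimono kappa_convex deriv_cond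
          less_imp_le[OF beta(2)]] N[OF that] by (simp add: \<kappa>_def)
  qed (rule \<kappa>_pos)
  then have "eventually (\<lambda>k. ereal (a k / \<kappa> k) \<le> ereal M) sequentially"
    unfolding eventually_sequentially by auto
  then have "limsup (\<lambda>k. ereal (a k / \<kappa> k)) \<le> ereal M" by (rule Limsup_bounded)
  then show ?thesis unfolding \<kappa>_def using le_less_trans by fastforce
qed

end
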